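(* Let $ABC$ be a triangle with Nagel point $N$. Let $A_0, B_0, C_0$ be the points where the $A$-, $B$-, $C$-excircles touch the sides $BC, CA, AB$ respectively. Let $d>0$ and consider six points $A_1, A_2$ on line $BC$, $B_1, B_2$ on line $CA$, $C_1, C_2$ on line $AB$ such that \[ A_1A_0 = A_2A_0 = B_1B_0 = B_2B_0 = C_1C_0 = C_2C_0 = d, \] where $A_1, B_1, C_1$ lie on the rays $A_0C, B_0A, C_0B$ and $A_2, C_2, B_2$ lie on the rays $A_0B, C_0A, B_0C$ respectively. Then the radical axis of the circumcircles $\odot(A_1B_1C_1)$ and $\odot(A_2B_2C_2)$ passes through the Nagel point $N$, the centroid, and the incenter of $ABC$.
   Context: The Nagel point of $ABC$ is the common point of the lines $AA_0, BB_0, CC_0$ joining each vertex to the touch point of the opposite excircle with the opposite side. *)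

theory Defs
  imports "HOL-Analysis.Analysis"
begin

definition gline :: "real^2 \<Rightarrow> real^2 \<Rightarrow> (real^2) set" where
  "gline P Q = affine hull {P, Q}"

definition ray :: "real^2 \<Rightarrow> real^2 \<Rightarrow> (real^2) set" where
  "ray P Q = {P + t *\<^sub>R (Q - P) | t. t \<ge> 0}"

text \<open>J is the centre of the excircle opposite A: equidistant from the three side lines
  and strictly on the other side of line BC than A.\<close>
definition is_excenter :: "real^2 \<Rightarrow> real^2 \<Rightarrow> real^2 \<Rightarrow> real^2 \<Rightarrow> bool" where
  "is_excenter A B C J \<longleftrightarrow>
     infdist J (gline B C) = infdist J (gline C A) \<and>
     infdist J (gline C A) = infdist J (gline A B) \<and>
     J \<notin> gline B C \<and> closed_segment A J \<inter> gline B C \<noteq> {}"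

definition is_incenter :: "real^2 \<Rightarrow> real^2 \<Rightarrow> real^2 \<Rightarrow> real^2 \<Rightarrow> bool" where
  "is_incenter A B C I \<longleftrightarrow>
     I \<in> convex hull {A, B, C} \<and>
     infdist I (gline B C) = infdist I (gline C A) \<and>
     infdist I (gline C A) = infdist I (gline A B)"

definition touch_point :: "real^2 \<Rightarrow> real^2 \<Rightarrow> real^2 \<Rightarrow> real^2 \<Rightarrow> bool" where
  "touch_point J P Q X \<longleftrightarrow> X \<in> gline P Q \<and> dist J X = infdist J (gline P Q)"

definition is_circumcenter :: "real^2 \<Rightarrow> real^2 \<Rightarrow> real^2 \<Rightarrow> real^2 \<Rightarrow> bool" where
  "is_circumcenter X Y Z Q \<longleftrightarrow> \<not> collinear {X, Y, Z} \<and> dist Q X = dist Q Y \<and> dist Q Y = dist Q Z"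

definition power :: "real^2 \<Rightarrow> real^2 \<Rightarrow> real \<Rightarrow> real" where
  "power P Q r = (dist P Q)\<^sup>2 - r\<^sup>2"

definition radical_axis :: "real^2 \<Rightarrow> real \<Rightarrow> real^2 \<Rightarrow> real \<Rightarrow> (real^2) set" where
  "radical_axis O1 r1 O2 r2 = {P. power P O1 r1 = power P O2 r2}"

end

theory Submission
  imports Defs
begin

text \<open>Let \<open>a, b, c\<close> be the side lengths and \<open>u = s - a\<close>, \<open>v = s - b\<close>, \<open>w = s - c\<close> the tangent
  lengths, so that \<open>BA\<^sub>0 = w\<close>, \<open>CB\<^sub>0 = u\<close>, \<open>AC\<^sub>0 = v\<close>. The first circle passes through the points at
  distance \<open>w + d\<close> from \<open>B\<close> on \<open>BC\<close>, \<open>u + d\<close> from \<open>C\<close> on \<open>CA\<close> and \<open>v + d\<close> from \<open>A\<close> on \<open>AB\<close>; the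
  second circle is the same construction with \<open>d\<close> replaced by \<open>-d\<close>.
  Stewart's theorem on each side gives a linear system for the powers \<open>x, y, z\<close> of \<open>A, B, C\<close>.
  Solving it by Cramer's rule, with determinant \<open>2 (u v w + d\<^sup>2 (u + v + w))\<close> positive and even
  in \<open>d\<close>, shows that \<open>x + y + z\<close> and \<open>u x + v y + w z\<close> are even functions of \<open>d\<close>. The difference of the powers
  with respect to two circles is affine, so the radical axis is the set of points whose barycentric
  coordinates annihilate the vector of power differences at the vertices; hence it contains the
  centroid \<open>(1 : 1 : 1)\<close>, the Nagel point \<open>(u : v : w)\<close> and the incenter
  \<open>(a : b : c) = (v + w : w + u : u + v)\<close>.\<close>

text \<open>The point with homogeneous barycentric coordinates \<open>\<alpha> : \<beta> : \<gamma>\<close>; junk when \<open>\<alpha> + \<beta> + \<gamma> = 0\<close>.\<close>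

definition barycentric :: "'a::real_vector \<Rightarrow> 'a \<Rightarrow> 'a \<Rightarrow> real \<Rightarrow> real \<Rightarrow> real \<Rightarrow> 'a" where
  "barycentric A B C \<alpha> \<beta> \<gamma> =
     (\<alpha> / (\<alpha> + \<beta> + \<gamma>)) *\<^sub>R A + (\<beta> / (\<alpha> + \<beta> + \<gamma>)) *\<^sub>R B + (\<gamma> / (\<alpha> + \<beta> + \<gamma>)) *\<^sub>R C"

lemma barycentric_affine:
  "\<alpha> + \<beta> + \<gamma> = 1 \<Longrightarrow> barycentric A B C \<alpha> \<beta> \<gamma> = \<alpha> *\<^sub>R A + \<beta> *\<^sub>R B + \<gamma> *\<^sub>R C"
  by (simp add: barycentric_def)

lemma barycentric_scale:
  "k \<noteq> 0 \<Longrightarrow> barycentric A B C (k * \<alpha>) (k * \<beta>) (k * \<gamma>) = barycentric A B C \<alpha> \<beta> \<gamma>"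
  by (simp add: barycentric_def flip: distrib_left)

definition side_point :: "'a::real_normed_vector \<Rightarrow> 'a \<Rightarrow> real \<Rightarrow> 'a" where
  "side_point P Q s = P + (s / dist P Q) *\<^sub>R (Q - P)"

definition cross2 :: "real^2 \<Rightarrow> real^2 \<Rightarrow> real" where
  "cross2 p q = p$1 * q$2 - p$2 * q$1"

lemma vec2_eq_iff: "(x::real^2) = y \<longleftrightarrow> x$1 = y$1 \<and> x$2 = y$2"
  by (simp add: vec_eq_iff forall_2)

lemma dist_sq_vec2: "(dist (P::real^2) Q)\<^sup>2 = (P$1 - Q$1)\<^sup>2 + (P$2 - Q$2)\<^sup>2"
proof -
  have "(dist P Q)\<^sup>2 = (P - Q) \<bullet> (P - Q)" by (simp add: dist_norm power2_norm_eq_inner)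
  then show ?thesis by (simp add: inner_vec_def sum_2 power2_eq_square)
qed

lemma inner_vec2: "(P::real^2) \<bullet> Q = P$1 * Q$1 + P$2 * Q$2"
  by (simp add: inner_vec_def sum_2)

lemma cross2_coords:
  assumes "cross2 b c \<noteq> 0"
  shows "p = \<beta> *\<^sub>R b + \<gamma> *\<^sub>R c \<longleftrightarrow>
    \<beta> = cross2 p c / cross2 b c \<and> \<gamma> = cross2 b p / cross2 b c"
proof
  assume "p = \<beta> *\<^sub>R b + \<gamma> *\<^sub>R c"
  then have "cross2 p c = \<beta> * cross2 b c" "cross2 b p = \<gamma> * cross2 b c"
    by (simp_all add: cross2_def algebra_simps)
  then show "\<beta> = cross2 p c / cross2 b c \<and> \<gamma> = cross2 b p / cross2 b c"
    using assms by simp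
next
  assume "\<beta> = cross2 p c / cross2 b c \<and> \<gamma> = cross2 b p / cross2 b c"
  then show "p = \<beta> *\<^sub>R b + \<gamma> *\<^sub>R c"
    using assms by (simp add: vec2_eq_iff cross2_def field_simps) algebra
qed

lemma cross2_eq_0_imp_parallel:
  assumes "cross2 p q = 0" and "p \<noteq> 0"
  shows "\<exists>k. q = k *\<^sub>R p"
proof -
  have "p$1 \<noteq> 0 \<or> p$2 \<noteq> 0" using assms(2) by (simp add: vec2_eq_iff)
  then show ?thesis
  proof
    assume "p$1 \<noteq> 0"
    then have "q = (q$1 / p$1) *\<^sub>R p"
      using assms(1) by (simp add: vec2_eq_iff cross2_def field_simps)
    then show ?thesis by blast
  next
    assume "p$2 \<noteq> 0"
    then have "q = (q$2 / p$2) *\<^sub>R p"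
      using assms(1) by (simp add: vec2_eq_iff cross2_def field_simps)
    then show ?thesis by blast
  qed
qed

lemma noncollinear_imp_cross2_nonzero:
  assumes "\<not> collinear {A, B, C::real^2}"
  shows "cross2 (B - A) (C - A) \<noteq> 0"
proof
  assume D: "cross2 (B - A) (C - A) = 0"
  have "collinear {0, B - A, C - A}"
  proof (cases "B - A = 0")
    case True
    then show ?thesis unfolding collinear_lemma by blast
  next
    case False
    then show ?thesis using cross2_eq_0_imp_parallel[OF D False] unfolding collinear_lemma by blast
  qed
  then have "collinear {B, A, C}" by (subst collinear_3) auto
  then show False using assms by (simp add: insert_commute)
qed

lemma noncollinear_imp_distinct:
  assumes "\<not> collinear {A, B, C::real^2}"
  shows "A \<noteq> B" "B \<noteq> C" "C \<noteq> A"
  using assms collinear_2 by (auto simp: insert_commute)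

lemma affine_coords_exist:
  assumes "\<not> collinear {A, B, C::real^2}"
  obtains \<alpha> \<beta> \<gamma> where "\<alpha> + \<beta> + \<gamma> = 1" "P = \<alpha> *\<^sub>R A + \<beta> *\<^sub>R B + \<gamma> *\<^sub>R C"
proof -
  obtain \<beta> \<gamma> where "P - A = \<beta> *\<^sub>R (B - A) + \<gamma> *\<^sub>R (C - A)"
    using cross2_coords[OF noncollinear_imp_cross2_nonzero[OF assms]] by blast
  then have "P = (1 - \<beta> - \<gamma>) *\<^sub>R A + \<beta> *\<^sub>R B + \<gamma> *\<^sub>R C"
    by (simp add: algebra_simps)
  then show ?thesis using that[of "1 - \<beta> - \<gamma>" \<beta> \<gamma>] by simp
qed

lemma affine_coords_unique:
  assumes "\<not> collinear {A, B, C::real^2}"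
    and "\<alpha> + \<beta> + \<gamma> = 1" "\<alpha>' + \<beta>' + \<gamma>' = 1"
    and "\<alpha> *\<^sub>R A + \<beta> *\<^sub>R B + \<gamma> *\<^sub>R C = \<alpha>' *\<^sub>R A + \<beta>' *\<^sub>R B + \<gamma>' *\<^sub>R C"
  shows "\<alpha> = \<alpha>' \<and> \<beta> = \<beta>' \<and> \<gamma> = \<gamma>'"
proof -
  have rel: "\<alpha> *\<^sub>R A + \<beta> *\<^sub>R B + \<gamma> *\<^sub>R C - A = \<beta> *\<^sub>R (B - A) + \<gamma> *\<^sub>R (C - A)"
    if "\<alpha> + \<beta> + \<gamma> = 1" for \<alpha> \<beta> \<gamma>
  proof -
    have "\<alpha> *\<^sub>R A + \<beta> *\<^sub>R B + \<gamma> *\<^sub>R C - A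
        = (\<alpha> + \<beta> + \<gamma> - 1) *\<^sub>R A + \<beta> *\<^sub>R (B - A) + \<gamma> *\<^sub>R (C - A)"
      by (simp add: algebra_simps)
    then show ?thesis using that by simp
  qed
  note coords = cross2_coords[OF noncollinear_imp_cross2_nonzero[OF assms(1)]]
  have "\<beta> = \<beta>' \<and> \<gamma> = \<gamma>'"
    using coords[THEN iffD1, OF rel[OF assms(2)]] coords[THEN iffD1, OF rel[OF assms(3)]] assms(4)
    by simp
  then show ?thesis using assms(2,3) by simp
qed

lemma gline_iff: "X \<in> gline B C \<longleftrightarrow> (\<exists>t. X = B + t *\<^sub>R (C - B))"
proof -
  have "X \<in> gline B C \<longleftrightarrow> (\<exists>u v. X = u *\<^sub>R B + v *\<^sub>R C \<and> u + v = 1)"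
    unfolding gline_def affine_hull_2 by blast
  also have "\<dots> \<longleftrightarrow> (\<exists>t. X = B + t *\<^sub>R (C - B))"
  proof
    assume "\<exists>u v. X = u *\<^sub>R B + v *\<^sub>R C \<and> u + v = 1"
    then obtain u v where "X = u *\<^sub>R B + v *\<^sub>R C" "u + v = 1" by blast
    then have "X = B + v *\<^sub>R (C - B)" by (simp add: algebra_simps flip: scaleR_add_left)
    then show "\<exists>t. X = B + t *\<^sub>R (C - B)" by blast
  next
    assume "\<exists>t. X = B + t *\<^sub>R (C - B)"
    then obtain t where "X = B + t *\<^sub>R (C - B)" by blast
    then have "X = (1 - t) *\<^sub>R B + t *\<^sub>R C \<and> (1 - t) + t = 1" by (simp add: algebra_simps)
    then show "\<exists>u v. X = u *\<^sub>R B + v *\<^sub>R C \<and> u + v = 1" by blast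
  qed
  finally show ?thesis .
qed

lemma dist_sq_gline_point:
  assumes "B \<noteq> C"
  shows "(dist P (B + t *\<^sub>R (C - B)))\<^sup>2 = (cross2 (C - B) (P - B))\<^sup>2 / (dist B C)\<^sup>2
     + (t - ((P - B) \<bullet> (C - B)) / (dist B C)\<^sup>2)\<^sup>2 * (dist B C)\<^sup>2"
proof -
  define E where "E = (dist B C)\<^sup>2"
  define m where "m = (P - B) \<bullet> (C - B)"
  have E: "E > 0" using assms unfolding E_def by simp
  \<comment> \<open>Lagrange's identity in the plane\<close>
  have "E * (dist P (B + t *\<^sub>R (C - B)))\<^sup>2 = (cross2 (C - B) (P - B))\<^sup>2 + (t * E - m)\<^sup>2"
    unfolding E_def m_def dist_sq_vec2 inner_vec2 cross2_def by simp algebra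
  then have "(dist P (B + t *\<^sub>R (C - B)))\<^sup>2 = (cross2 (C - B) (P - B))\<^sup>2 / E + (t * E - m)\<^sup>2 / E"
    using E by (simp add: field_simps)
  moreover have "(t * E - m)\<^sup>2 / E = (t - m / E)\<^sup>2 * E"
    using E by (simp add: field_simps power2_eq_square)
  ultimately show ?thesis unfolding E_def m_def by simp
qed

lemma infdist_gline:
  assumes "B \<noteq> C"
  shows "infdist P (gline B C) = \<bar>cross2 (C - B) (P - B)\<bar> / dist B C"
proof -
  define r where "r = \<bar>cross2 (C - B) (P - B)\<bar> / dist B C"
  define F where "F = B + (((P - B) \<bullet> (C - B)) / (dist B C)\<^sup>2) *\<^sub>R (C - B)"
  have r2: "r\<^sup>2 = (cross2 (C - B) (P - B))\<^sup>2 / (dist B C)\<^sup>2"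
    unfolding r_def by (simp add: power_divide)
  have F: "F \<in> gline B C" unfolding F_def gline_iff by blast
  have "(dist P F)\<^sup>2 = r\<^sup>2" unfolding F_def dist_sq_gline_point[OF assms] r2 by simp
  then have dF: "dist P F = r" unfolding r_def by (simp add: power2_eq_iff_nonneg)
  have ge: "r \<le> dist P Y" if Y: "Y \<in> gline B C" for Y
  proof -
    obtain t where "Y = B + t *\<^sub>R (C - B)" using Y gline_iff by blast
    then have "r\<^sup>2 \<le> (dist P Y)\<^sup>2" by (simp add: dist_sq_gline_point[OF assms] r2)
    then show ?thesis by (rule power2_le_imp_le[OF _ zero_le_dist])
  qed
  have "gline B C \<noteq> {}" using F by blast
  then have "r \<le> infdist P (gline B C)"
    unfolding infdist_notempty[OF \<open>gline B C \<noteq> {}\<close>] by (rule cINF_greatest) (rule ge)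
  moreover have "infdist P (gline B C) \<le> r" using infdist_le[OF F, of P] dF by simp
  ultimately show ?thesis unfolding r_def by linarith
qed

lemma nearest_gline_point_eq_foot:
  assumes "B \<noteq> C" "X \<in> gline B C" "dist P X = infdist P (gline B C)"
  shows "X = B + (((P - B) \<bullet> (C - B)) / (dist B C)\<^sup>2) *\<^sub>R (C - B)"
proof -
  obtain t where t: "X = B + t *\<^sub>R (C - B)" using assms(2) gline_iff by blast
  have "(dist P X)\<^sup>2 = (cross2 (C - B) (P - B))\<^sup>2 / (dist B C)\<^sup>2"
    using assms(3) unfolding infdist_gline[OF assms(1)] by (simp add: power_divide)
  then have "(t - ((P - B) \<bullet> (C - B)) / (dist B C)\<^sup>2)\<^sup>2 * (dist B C)\<^sup>2 = 0"
    unfolding t dist_sq_gline_point[OF assms(1)] by simp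
  then show ?thesis using t assms(1) by simp
qed

lemma cross2_affine_combination:
  assumes "\<alpha> + \<beta> + \<gamma> = 1" "P = \<alpha> *\<^sub>R A + \<beta> *\<^sub>R B + \<gamma> *\<^sub>R C"
  shows "cross2 (C - B) (P - B) = \<alpha> * cross2 (B - A) (C - A)"
    and "cross2 (A - C) (P - C) = \<beta> * cross2 (B - A) (C - A)"
    and "cross2 (B - A) (P - A) = \<gamma> * cross2 (B - A) (C - A)"
proof -
  have \<gamma>: "\<gamma> = 1 - \<alpha> - \<beta>" using assms(1) by simp
  show "cross2 (C - B) (P - B) = \<alpha> * cross2 (B - A) (C - A)"
    and "cross2 (A - C) (P - C) = \<beta> * cross2 (B - A) (C - A)"
    and "cross2 (B - A) (P - A) = \<gamma> * cross2 (B - A) (C - A)"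
    unfolding assms(2) cross2_def \<gamma> by (simp_all add: algebra_simps)
qed

lemma equidistant_sides_affine_coords:
  assumes tri: "\<not> collinear {A, B, C}"
    and P: "\<alpha> + \<beta> + \<gamma> = 1" "P = \<alpha> *\<^sub>R A + \<beta> *\<^sub>R B + \<gamma> *\<^sub>R C"
    and eq: "infdist P (gline B C) = infdist P (gline C A)"
      "infdist P (gline C A) = infdist P (gline A B)"
  shows "\<bar>\<alpha>\<bar> / dist B C = \<bar>\<beta>\<bar> / dist C A" "\<bar>\<beta>\<bar> / dist C A = \<bar>\<gamma>\<bar> / dist A B"
proof -
  define D where "D = \<bar>cross2 (B - A) (C - A)\<bar>"
  have D: "D \<noteq> 0" using noncollinear_imp_cross2_nonzero[OF tri] D_def by simp
  note ne = noncollinear_imp_distinct[OF tri]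
  note cr = cross2_affine_combination[OF P]
  have "infdist P (gline B C) = \<bar>\<alpha>\<bar> / dist B C * D"
    "infdist P (gline C A) = \<bar>\<beta>\<bar> / dist C A * D"
    "infdist P (gline A B) = \<bar>\<gamma>\<bar> / dist A B * D"
    using infdist_gline[OF ne(2)] infdist_gline[OF ne(3)] infdist_gline[OF ne(1)] cr
    by (simp_all add: D_def abs_mult)
  then have "\<bar>\<alpha>\<bar> / dist B C * D = \<bar>\<beta>\<bar> / dist C A * D"
    and "\<bar>\<beta>\<bar> / dist C A * D = \<bar>\<gamma>\<bar> / dist A B * D"
    using eq by simp_all
  then show "\<bar>\<alpha>\<bar> / dist B C = \<bar>\<beta>\<bar> / dist C A" "\<bar>\<beta>\<bar> / dist C A = \<bar>\<gamma>\<bar> / dist A B"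
    by (simp_all only: mult_right_cancel[OF D])
qed

lemma segment_meets_side_imp_coord_nonpos:
  assumes tri: "\<not> collinear {A, B, C}"
    and P: "\<alpha> + \<beta> + \<gamma> = 1" "P = \<alpha> *\<^sub>R A + \<beta> *\<^sub>R B + \<gamma> *\<^sub>R C"
    and meet: "closed_segment A P \<inter> gline B C \<noteq> {}"
  shows "\<alpha> \<le> 0"
proof -
  obtain Y where Y: "Y \<in> closed_segment A P" "Y \<in> gline B C" using meet by blast
  obtain l where l: "0 \<le> l" "l \<le> 1" "Y = (1 - l) *\<^sub>R A + l *\<^sub>R P"
    using Y(1) unfolding closed_segment_def by blast
  obtain t where t: "Y = B + t *\<^sub>R (C - B)" using Y(2) gline_iff by blast
  have "(1 - l + l * \<alpha>) *\<^sub>R A + (l * \<beta>) *\<^sub>R B + (l * \<gamma>) *\<^sub>R C = Y"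
    unfolding l(3) P(2) by (simp add: algebra_simps)
  also have "\<dots> = 0 *\<^sub>R A + (1 - t) *\<^sub>R B + t *\<^sub>R C"
    unfolding t by (simp add: algebra_simps)
  finally have eq: "(1 - l + l * \<alpha>) *\<^sub>R A + (l * \<beta>) *\<^sub>R B + (l * \<gamma>) *\<^sub>R C
      = 0 *\<^sub>R A + (1 - t) *\<^sub>R B + t *\<^sub>R C" .
  have "(1 - l + l * \<alpha>) + l * \<beta> + l * \<gamma> = 1 - l + l * (\<alpha> + \<beta> + \<gamma>)"
    by (simp add: algebra_simps)
  then have sum: "(1 - l + l * \<alpha>) + l * \<beta> + l * \<gamma> = 1" using P(1) by simp
  have "0 + (1 - t) + t = 1" by simp
  with affine_coords_unique[OF tri sum this eq] have "1 - l + l * \<alpha> = 0" by simp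
  then have "l \<noteq> 0" and "\<alpha> = (l - 1) / l" by (auto simp: eq_divide_eq algebra_simps)
  then show "\<alpha> \<le> 0" using l by (simp add: divide_nonpos_pos)
qed

lemma dist_triangle_strict_noncollinear:
  assumes "\<not> collinear {A, B, C::real^2}"
  shows "dist B C < dist C A + dist A B"
proof -
  have "\<not> between (B, C) A"
    using assms between_imp_collinear[of B C A] by (metis insert_commute)
  then have "dist B C \<noteq> dist B A + dist A C" unfolding between by simp
  moreover have "dist B C \<le> dist B A + dist A C" by (rule dist_triangle)
  ultimately show ?thesis by (simp add: dist_commute)
qed

lemma incenter_barycentric:
  assumes tri: "\<not> collinear {A, B, C}" and inc: "is_incenter A B C I"
  shows "I = barycentric A B C (dist B C) (dist C A) (dist A B)"
proof -
  obtain \<alpha> \<beta> \<gamma> where nonneg: "0 \<le> \<alpha>" "0 \<le> \<beta>" "0 \<le> \<gamma>" and I: "\<alpha> + \<beta> + \<gamma> = 1"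
    "I = \<alpha> *\<^sub>R A + \<beta> *\<^sub>R B + \<gamma> *\<^sub>R C"
    using inc unfolding is_incenter_def convex_hull_3 by blast
  define k where "k = \<alpha> / dist B C"
  have "\<beta> / dist C A = k" "\<gamma> / dist A B = k"
    using equidistant_sides_affine_coords[OF tri I] inc nonneg unfolding is_incenter_def k_def
    by simp_all
  then have coords: "\<alpha> = k * dist B C" "\<beta> = k * dist C A" "\<gamma> = k * dist A B"
    using noncollinear_imp_distinct[OF tri] unfolding k_def by (simp_all add: divide_eq_eq)
  then have "k \<noteq> 0" using I(1) by auto
  have "I = barycentric A B C \<alpha> \<beta> \<gamma>" unfolding barycentric_affine[OF I(1)] by (rule I(2))
  also have "\<dots> = barycentric A B C (k * dist B C) (k * dist C A) (k * dist A B)" unfolding coords ..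
  finally show ?thesis unfolding barycentric_scale[OF \<open>k \<noteq> 0\<close>] .
qed

lemma excenter_barycentric:
  assumes tri: "\<not> collinear {A, B, C}" and ex: "is_excenter A B C J"
  shows "J = barycentric A B C (- dist B C) (dist C A) (dist A B)"
proof -
  obtain \<alpha> \<beta> \<gamma> where J: "\<alpha> + \<beta> + \<gamma> = 1" "J = \<alpha> *\<^sub>R A + \<beta> *\<^sub>R B + \<gamma> *\<^sub>R C"
    using affine_coords_exist[OF tri] by metis
  have "\<alpha> \<noteq> 0"
  proof
    assume "\<alpha> = 0"
    then have "J = B + \<gamma> *\<^sub>R (C - B)" using J by (simp add: algebra_simps flip: scaleR_add_left)
    then show False using ex unfolding is_excenter_def gline_iff by blast
  qed
  moreover have "\<alpha> \<le> 0"
    using segment_meets_side_imp_coord_nonpos[OF tri J] ex unfolding is_excenter_def by blast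
  ultimately have \<alpha>: "\<alpha> < 0" by simp
  define k where "k = \<bar>\<alpha>\<bar> / dist B C"
  note ne = noncollinear_imp_distinct[OF tri]
  have k: "k > 0" using \<alpha> ne unfolding k_def by (simp add: divide_neg_pos)
  have "\<bar>\<beta>\<bar> / dist C A = k" "\<bar>\<gamma>\<bar> / dist A B = k"
    using equidistant_sides_affine_coords[OF tri J] ex unfolding is_excenter_def k_def by simp_all
  then have abs_coords: "\<alpha> = - k * dist B C" "\<bar>\<beta>\<bar> = k * dist C A" "\<bar>\<gamma>\<bar> = k * dist A B"
    using \<alpha> ne unfolding k_def by (simp_all add: divide_eq_eq)
  \<comment> \<open>By the triangle inequality, a negative \<open>\<beta>\<close> or \<open>\<gamma>\<close> would force \<open>\<alpha> + \<beta> + \<gamma> \<le> 0\<close>.\<close>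
  have "k * dist C A \<le> k * dist A B + k * dist B C" "k * dist A B \<le> k * dist B C + k * dist C A"
    using k dist_triangle[of C A B] dist_triangle[of A B C]
    by (simp_all add: dist_commute flip: distrib_left)
  then have coords: "\<beta> = k * dist C A" "\<gamma> = k * dist A B"
    using J(1) abs_coords k by (auto simp: abs_if split: if_splits)
  have "J = barycentric A B C \<alpha> \<beta> \<gamma>" unfolding barycentric_affine[OF J(1)] by (rule J(2))
  also have "\<dots> = barycentric A B C (k * - dist B C) (k * dist C A) (k * dist A B)"
    unfolding abs_coords(1) coords by simp
  finally show ?thesis unfolding barycentric_scale[OF k[THEN less_imp_neq, symmetric]] .
qed

lemma two_inner_eq_dist_sq:
  fixes A B C :: "'a::real_inner"
  shows "2 * ((A - B) \<bullet> (C - B)) = (dist B C)\<^sup>2 + (dist A B)\<^sup>2 - (dist C A)\<^sup>2"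
  unfolding dist_norm power2_norm_eq_inner
  by (simp add: inner_diff_left inner_diff_right inner_commute)

lemma excircle_touch_point:
  assumes tri: "\<not> collinear {A, B, C}" and ex: "is_excenter A B C J"
    and touch: "touch_point J B C X"
  shows "X = side_point B C ((dist B C + dist C A - dist A B) / 2)"
proof -
  define a b c where "a = dist B C" and "b = dist C A" and "c = dist A B"
  have pos: "a > 0" "b + c - a > 0"
    using noncollinear_imp_distinct[OF tri] dist_triangle_strict_noncollinear[OF tri]
    unfolding a_def b_def c_def by auto
  have "J = barycentric A B C (- a) b c"
    using excenter_barycentric[OF tri ex] unfolding a_def b_def c_def .
  then have J: "J = (- a / (b + c - a)) *\<^sub>R A + (b / (b + c - a)) *\<^sub>R B + (c / (b + c - a)) *\<^sub>R C"
    unfolding barycentric_def by (simp add: algebra_simps)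
  have "- a / (b + c - a) + b / (b + c - a) + c / (b + c - a) = 1"
    using pos by (simp add: divide_simps)
  moreover have "J - B = (- a / (b + c - a)) *\<^sub>R (A - B) + (c / (b + c - a)) *\<^sub>R (C - B)
      + (- a / (b + c - a) + b / (b + c - a) + c / (b + c - a) - 1) *\<^sub>R B"
    unfolding J by (simp add: algebra_simps)
  ultimately have JB: "J - B = (- a / (b + c - a)) *\<^sub>R (A - B) + (c / (b + c - a)) *\<^sub>R (C - B)"
    by simp
  have AB: "(A - B) \<bullet> (C - B) = (a\<^sup>2 + c\<^sup>2 - b\<^sup>2) / 2"
    using two_inner_eq_dist_sq[of A B C] unfolding a_def b_def c_def by simp
  have CB: "(C - B) \<bullet> (C - B) = a\<^sup>2"
    unfolding a_def by (simp add: dot_square_norm dist_norm norm_minus_commute)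
  have "(J - B) \<bullet> (C - B)
      = - a / (b + c - a) * ((A - B) \<bullet> (C - B)) + c / (b + c - a) * ((C - B) \<bullet> (C - B))"
    unfolding JB inner_add_left inner_scaleR_left ..
  also have "\<dots> = - a / (b + c - a) * ((a\<^sup>2 + c\<^sup>2 - b\<^sup>2) / 2) + c / (b + c - a) * a\<^sup>2"
    unfolding AB CB ..
  also have "\<dots> = (- a * (a\<^sup>2 + c\<^sup>2 - b\<^sup>2) + 2 * c * a\<^sup>2) / ((b + c - a) * 2)"
    using pos(2) by (simp add: divide_simps) algebra
  also have "\<dots> = (b + c - a) * (a * (a + b - c)) / ((b + c - a) * 2)"
    by (rule arg_cong[where f = "\<lambda>t. t / ((b + c - a) * 2)"]) algebra
  also have "\<dots> = a * (a + b - c) / 2"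
    using pos(2) by (intro nonzero_mult_divide_mult_cancel_left) simp
  finally have "((J - B) \<bullet> (C - B)) / a\<^sup>2 = ((a + b - c) / 2) / a"
    using pos by (simp add: field_simps power2_eq_square)
  moreover have "X = B + (((J - B) \<bullet> (C - B)) / a\<^sup>2) *\<^sub>R (C - B)"
    using nearest_gline_point_eq_foot noncollinear_imp_distinct[OF tri] touch
    unfolding touch_point_def a_def by blast
  ultimately show ?thesis unfolding side_point_def a_def b_def c_def by simp
qed

lemma ray_point_at_dist:
  assumes "X \<noteq> Q" "Y \<in> ray X Q" "dist Y X = d"
  shows "Y = X + (d / dist X Q) *\<^sub>R (Q - X)"
proof -
  obtain t where t: "t \<ge> 0" "Y = X + t *\<^sub>R (Q - X)" using assms(2) unfolding ray_def by blast
  then have "d = t * dist X Q" using assms(3) by (simp add: dist_norm norm_minus_commute)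
  then show ?thesis using t assms(1) by simp
qed

lemma ray_side_point:
  assumes "0 < s" "s < dist P Q" and "dist Y (side_point P Q s) = d"
  shows "Y \<in> ray (side_point P Q s) Q \<Longrightarrow> Y = side_point P Q (s + d)"
    and "Y \<in> ray (side_point P Q s) P \<Longrightarrow> Y = side_point P Q (s - d)"
proof -
  define a where "a = dist P Q"
  define X where "X = side_point P Q s"
  have a: "a > 0" "s < a" "P \<noteq> Q" using assms(1,2) unfolding a_def by auto
  have toQ: "Q - X = ((a - s) / a) *\<^sub>R (Q - P)" and toP: "P - X = (- s / a) *\<^sub>R (Q - P)"
    using a unfolding X_def side_point_def a_def by (simp_all add: algebra_simps diff_divide_distrib)
  have "dist X Q = a - s" "dist X P = s"
    using a assms(1) by (simp_all add: dist_norm norm_minus_commute toQ toP a_def)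
  moreover have "X \<noteq> Q" "X \<noteq> P" using \<open>dist X Q = a - s\<close> \<open>dist X P = s\<close> a assms(1) by auto
  moreover have "d / (a - s) * ((a - s) / a) = d / a" "d / s * (- s / a) = - (d / a)"
    using a assms(1) by simp_all
  ultimately have "Y \<in> ray X Q \<Longrightarrow> Y = X + (d / a) *\<^sub>R (Q - P)"
    and "Y \<in> ray X P \<Longrightarrow> Y = X - (d / a) *\<^sub>R (Q - P)"
    using ray_point_at_dist[of X Q Y d] ray_point_at_dist[of X P Y d] assms(3)
    unfolding X_def[symmetric] toQ toP by simp_all
  then show "Y \<in> ray (side_point P Q s) Q \<Longrightarrow> Y = side_point P Q (s + d)"
    and "Y \<in> ray (side_point P Q s) P \<Longrightarrow> Y = side_point P Q (s - d)"
    unfolding X_def side_point_def a_def[symmetric]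
    by (simp_all add: add_divide_distrib diff_divide_distrib algebra_simps)
qed

lemma dist_sq_affine_combination:
  fixes A B C Q :: "'a::real_inner"
  assumes "\<alpha> + \<beta> + \<gamma> = 1"
  shows "(dist (\<alpha> *\<^sub>R A + \<beta> *\<^sub>R B + \<gamma> *\<^sub>R C) Q)\<^sup>2
       = \<alpha> * (dist A Q)\<^sup>2 + \<beta> * (dist B Q)\<^sup>2 + \<gamma> * (dist C Q)\<^sup>2
         - (\<beta> * \<gamma> * (dist B C)\<^sup>2 + \<gamma> * \<alpha> * (dist C A)\<^sup>2 + \<alpha> * \<beta> * (dist A B)\<^sup>2)"
  using assms unfolding dist_norm power2_norm_eq_inner
  by (simp add: inner_commute algebra_simps) algebra

lemma power_side_point:
  assumes "P \<noteq> Q" "dist M (side_point P Q s) = R"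
  shows "(dist P Q - s) * power P M R + s * power Q M R = dist P Q * s * (dist P Q - s)"
proof -
  define a t where "a = dist P Q" and "t = s / a"
  have s: "s = t * a" using assms(1) unfolding a_def t_def by simp
  have "side_point P Q s = (1 - t) *\<^sub>R P + t *\<^sub>R Q + 0 *\<^sub>R P"
    unfolding side_point_def a_def[symmetric] t_def[symmetric] by (simp add: algebra_simps)
  then have "R\<^sup>2 = (1 - t) * (dist P M)\<^sup>2 + t * (dist Q M)\<^sup>2 - (1 - t) * t * a\<^sup>2"
    using dist_sq_affine_combination[of "1 - t" t 0 P Q P M] assms(2)
    by (simp add: dist_commute a_def)
  then show ?thesis unfolding power_def a_def[symmetric] s by algebra
qed

lemma barycentric_in_radical_axis_iff:
  assumes "\<alpha> + \<beta> + \<gamma> \<noteq> 0"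
  shows "barycentric A B C \<alpha> \<beta> \<gamma> \<in> radical_axis O1 R1 O2 R2 \<longleftrightarrow>
    \<alpha> * (power A O1 R1 - power A O2 R2) + \<beta> * (power B O1 R1 - power B O2 R2)
      + \<gamma> * (power C O1 R1 - power C O2 R2) = 0"
proof -
  define s where "s = \<alpha> + \<beta> + \<gamma>"
  have sum: "\<alpha> / s + \<beta> / s + \<gamma> / s = 1" using assms unfolding s_def by (simp add: divide_simps)
  \<comment> \<open>\<open>K\<close> does not depend on the circle, so it cancels in the difference of the powers.\<close>
  define K where "K = \<beta> / s * (\<gamma> / s) * (dist B C)\<^sup>2 + \<gamma> / s * (\<alpha> / s) * (dist C A)\<^sup>2
    + \<alpha> / s * (\<beta> / s) * (dist A B)\<^sup>2"
  have pw: "power (barycentric A B C \<alpha> \<beta> \<gamma>) M R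
      = \<alpha> / s * power A M R + \<beta> / s * power B M R + \<gamma> / s * power C M R - K" for M R
    using sum unfolding barycentric_def s_def[symmetric] power_def dist_sq_affine_combination[OF sum] K_def
    by algebra
  then have "power (barycentric A B C \<alpha> \<beta> \<gamma>) O1 R1 - power (barycentric A B C \<alpha> \<beta> \<gamma>) O2 R2
      = (\<alpha> * (power A O1 R1 - power A O2 R2) + \<beta> * (power B O1 R1 - power B O2 R2)
         + \<gamma> * (power C O1 R1 - power C O2 R2)) / s"
    unfolding pw by (simp add: add_divide_distrib diff_divide_distrib algebra_simps)
  then show ?thesis using assms unfolding radical_axis_def s_def by auto
qed

text \<open>The equations of Stewart's theorem on the three sides for the powers \<open>x, y, z\<close> of \<open>A, B, C\<close>
  with respect to a circle through the points of \<open>BC, CA, AB\<close> at distance \<open>w + d, u + d, v + d\<close>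
  from \<open>B, C, A\<close>, where \<open>BC = v + w\<close>, \<open>CA = w + u\<close>, \<open>AB = u + v\<close>.\<close>

definition stewart_system :: "real \<Rightarrow> real \<Rightarrow> real \<Rightarrow> real \<Rightarrow> real \<Rightarrow> real \<Rightarrow> real \<Rightarrow> bool" where
  "stewart_system u v w d x y z \<longleftrightarrow>
     (v - d) * y + (w + d) * z = (v + w) * (v - d) * (w + d) \<and>
     (w - d) * z + (u + d) * x = (w + u) * (w - d) * (u + d) \<and>
     (u - d) * x + (v + d) * y = (u + v) * (u - d) * (v + d)"

lemma stewart_system_circle:
  assumes "A \<noteq> B" "B \<noteq> C" "C \<noteq> A"
    and "dist B C = v + w" "dist C A = w + u" "dist A B = u + v"
    and "dist M (side_point B C (w + d)) = R" "dist M (side_point C A (u + d)) = R"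
      "dist M (side_point A B (v + d)) = R"
  shows "stewart_system u v w d (power A M R) (power B M R) (power C M R)"
  using power_side_point[OF assms(2,7)] power_side_point[OF assms(3,8)]
    power_side_point[OF assms(1,9)] assms(4-6)
  unfolding stewart_system_def by (simp add: algebra_simps)

lemma stewart_system_even:
  assumes "0 < u" "0 < v" "0 < w"
    and "stewart_system u v w d x y z" "stewart_system u v w (- d) x' y' z'"
  shows "x + y + z = x' + y' + z'" "u * x + v * y + w * z = u * x' + v * y' + w * z'"
proof -
  \<comment> \<open>\<open>2 \<delta>\<close> is the determinant of either system (Cramer's rule).\<close>
  define \<delta> where "\<delta> = u * v * w + d\<^sup>2 * (u + v + w)"
  have "\<delta> > 0" using assms(1-3) unfolding \<delta>_def by (simp add: add_pos_nonneg)
  moreover have "\<delta> * (x + y + z) = \<delta> * (x' + y' + z')"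
    "\<delta> * (u * x + v * y + w * z) = \<delta> * (u * x' + v * y' + w * z')"
    using assms(4,5) unfolding stewart_system_def \<delta>_def by algebra+
  ultimately show "x + y + z = x' + y' + z'" "u * x + v * y + w * z = u * x' + v * y' + w * z'"
    by simp_all
qed

lemma cevian_affine_coords:
  assumes tri: "\<not> collinear {A, B, C}"
    and P: "\<alpha> + \<beta> + \<gamma> = 1" "P = \<alpha> *\<^sub>R A + \<beta> *\<^sub>R B + \<gamma> *\<^sub>R C"
    and on: "P \<in> gline A (side_point B C s)"
  shows "\<beta> * s = \<gamma> * (dist B C - s)"
proof -
  define a where "a = dist B C"
  have a: "a > 0" using noncollinear_imp_distinct[OF tri] unfolding a_def by simp
  obtain t where "P = A + t *\<^sub>R (side_point B C s - A)" using on gline_iff by blast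
  then have "P = (1 - t) *\<^sub>R A + (t * (a - s) / a) *\<^sub>R B + (t * s / a) *\<^sub>R C"
    using a unfolding side_point_def a_def[symmetric] by (simp add: algebra_simps diff_divide_distrib)
  moreover have "(1 - t) + t * (a - s) / a + t * s / a = 1" using a by (simp add: field_simps)
  ultimately have "\<beta> = t * (a - s) / a" "\<gamma> = t * s / a"
    using affine_coords_unique[OF tri P(1)] P(2) by metis+
  then show ?thesis unfolding a_def[symmetric] by simp
qed

lemma nagel_barycentric:
  assumes tri: "\<not> collinear {A, B, C}" and "w \<noteq> 0"
    and sides: "dist B C = v + w" "dist C A = w + u"
    and N: "N \<in> gline A (side_point B C w)" "N \<in> gline B (side_point C A u)"
  shows "N = barycentric A B C u v w"
proof -
  obtain \<alpha> \<beta> \<gamma> where N': "\<alpha> + \<beta> + \<gamma> = 1" "N = \<alpha> *\<^sub>R A + \<beta> *\<^sub>R B + \<gamma> *\<^sub>R C"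
    using affine_coords_exist[OF tri] by metis
  define k where "k = \<gamma> / w"
  have "\<beta> * w = \<gamma> * v"
    using cevian_affine_coords[OF tri N' N(1)] sides by simp
  moreover have "\<gamma> * u = \<alpha> * w"
    using cevian_affine_coords[of B C A \<beta> \<gamma> \<alpha> N u] tri N' N(2) sides
    by (simp add: insert_commute algebra_simps)
  ultimately have coords: "\<alpha> = k * u" "\<beta> = k * v" "\<gamma> = k * w"
    using \<open>w \<noteq> 0\<close> unfolding k_def by (simp_all add: field_simps)
  then have "k \<noteq> 0" using N'(1) by auto
  have "N = barycentric A B C \<alpha> \<beta> \<gamma>" unfolding barycentric_affine[OF N'(1)] by (rule N'(2))
  also have "\<dots> = barycentric A B C (k * u) (k * v) (k * w)" unfolding coords ..
  finally show ?thesis unfolding barycentric_scale[OF \<open>k \<noteq> 0\<close>] .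
qed

lemma excircle_touch_points:
  assumes tri: "\<not> collinear {A, B, C}"
    and ex: "is_excenter A B C JA" "is_excenter B C A JB" "is_excenter C A B JC"
    and touch: "touch_point JA B C A0" "touch_point JB C A B0" "touch_point JC A B C0"
  obtains u v w where "0 < u" "0 < v" "0 < w"
    and "dist B C = v + w" "dist C A = w + u" "dist A B = u + v"
    and "A0 = side_point B C w" "B0 = side_point C A u" "C0 = side_point A B v"
proof -
  define u v w where "u = (dist C A + dist A B - dist B C) / 2"
    and "v = (dist A B + dist B C - dist C A) / 2" and "w = (dist B C + dist C A - dist A B) / 2"
  have tri': "\<not> collinear {B, C, A}" "\<not> collinear {C, A, B}"
    using tri by (simp_all add: insert_commute)
  have "0 < u" "0 < v" "0 < w"
    using dist_triangle_strict_noncollinear[OF tri] dist_triangle_strict_noncollinear[OF tri'(1)]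
      dist_triangle_strict_noncollinear[OF tri'(2)] unfolding u_def v_def w_def by simp_all
  moreover have "dist B C = v + w" "dist C A = w + u" "dist A B = u + v"
    by (simp_all add: u_def v_def w_def field_simps)
  moreover have "A0 = side_point B C w" "B0 = side_point C A u" "C0 = side_point A B v"
    using excircle_touch_point[OF tri ex(1) touch(1)] excircle_touch_point[OF tri'(1) ex(2) touch(2)]
      excircle_touch_point[OF tri'(2) ex(3) touch(3)] unfolding u_def v_def w_def by simp_all
  ultimately show thesis using that by blast
qed

theorem theorem1p1:
  fixes A B C JA JB JC A0 B0 C0 N I A1 A2 B1 B2 C1 C2 O1 O2 :: "real^2" and d :: real
  assumes tri: "\<not> collinear {A, B, C}"
    and exA: "is_excenter A B C JA" and exB: "is_excenter B C A JB" and exC: "is_excenter C A B JC"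
    and tA: "touch_point JA B C A0" and tB: "touch_point JB C A B0" and tC: "touch_point JC A B C0"
    and nagel: "N \<in> gline A A0" "N \<in> gline B B0" "N \<in> gline C C0"
    and inc: "is_incenter A B C I"
    and dpos: "d > 0"
    and A1: "A1 \<in> ray A0 C" "dist A1 A0 = d"
    and B1: "B1 \<in> ray B0 A" "dist B1 B0 = d"
    and C1: "C1 \<in> ray C0 B" "dist C1 C0 = d"
    and A2: "A2 \<in> ray A0 B" "dist A2 A0 = d"
    and B2: "B2 \<in> ray B0 C" "dist B2 B0 = d"
    and C2: "C2 \<in> ray C0 A" "dist C2 C0 = d"
    and O1: "is_circumcenter A1 B1 C1 O1"
    and O2: "is_circumcenter A2 B2 C2 O2"
  shows "N \<in> radical_axis O1 (dist O1 A1) O2 (dist O2 A2)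
       \<and> (1/3) *\<^sub>R (A + B + C) \<in> radical_axis O1 (dist O1 A1) O2 (dist O2 A2)
       \<and> I \<in> radical_axis O1 (dist O1 A1) O2 (dist O2 A2)"
proof -
  obtain u v w where pos: "0 < u" "0 < v" "0 < w"
    and sides: "dist B C = v + w" "dist C A = w + u" "dist A B = u + v"
    and touch: "A0 = side_point B C w" "B0 = side_point C A u" "C0 = side_point A B v"
    using excircle_touch_points[OF tri exA exB exC tA tB tC] .
  have "A1 = side_point B C (w + d)" "B1 = side_point C A (u + d)" "C1 = side_point A B (v + d)"
    "A2 = side_point B C (w + - d)" "B2 = side_point C A (u + - d)" "C2 = side_point A B (v + - d)"
    using ray_side_point A1 B1 C1 A2 B2 C2 pos sides unfolding touch by simp_all
  then have "stewart_system u v w d (power A O1 (dist O1 A1)) (power B O1 (dist O1 A1)) (power C O1 (dist O1 A1))"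
    "stewart_system u v w (- d) (power A O2 (dist O2 A2)) (power B O2 (dist O2 A2)) (power C O2 (dist O2 A2))"
    using O1 O2 noncollinear_imp_distinct[OF tri] sides
    by (auto intro!: stewart_system_circle simp: is_circumcenter_def)
  note even = stewart_system_even[OF pos this]
  define \<delta> where "\<delta> X = power X O1 (dist O1 A1) - power X O2 (dist O2 A2)" for X
  have "\<delta> A + \<delta> B + \<delta> C = 0" "u * \<delta> A + v * \<delta> B + w * \<delta> C = 0"
    using even unfolding \<delta>_def by (simp_all add: right_diff_distrib)
  moreover from this have "(v + w) * \<delta> A + (w + u) * \<delta> B + (u + v) * \<delta> C = 0" by algebra
  moreover have "N = barycentric A B C u v w"
    using nagel_barycentric[OF tri _ sides(1,2)] nagel(1,2) pos unfolding touch by simp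
  moreover have "I = barycentric A B C (v + w) (w + u) (u + v)"
    using incenter_barycentric[OF tri inc] unfolding sides .
  moreover have "(1/3) *\<^sub>R (A + B + C) = barycentric A B C 1 1 1"
    unfolding barycentric_def by (simp add: scaleR_add_right)
  moreover have "u + v + w \<noteq> 0" "(v + w) + (w + u) + (u + v) \<noteq> 0" using pos by linarith+
  ultimately show ?thesis by (simp add: barycentric_in_radical_axis_iff \<delta>_def)
qed

end
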